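(* Under the hypotheses and notation of the context, let $n\ge 2$ and assume $\phi_n(0)\ne0$ and $\phi_{n-1}(0)\neq 0$. Then $$\phi_n'(z)=A_n(z)\phi_{n-1}(z)-B_n(z)\phi_n(z),$$ and, with the operators $L_{n,1}=\frac{d}{dz}+B_n(z)$ and $L_{n,2}=-\frac{d}{dz}-B_{n-1}(z)+\frac{A_{n-1}(z)\kappa_{n-1}}{z\kappa_{n-2}}+\frac{A_{n-1}(z)\kappa_n\phi_{n-1}(0)}{\kappa_{n-2}\phi_n(0)}$, one has $$L_{n,1}\phi_n(z)=A_n(z)\phi_{n-1}(z),\qquad L_{n,2}\phi_{n-1}(z)=\frac{A_{n-1}(z)}{z}\,\frac{\phi_{n-1}(0)\kappa_{n-1}}{\phi_n(0)\kappa_{n-2}}\,\phi_n(z).$$ Consequently $\phi_n$ satisfies the second order differential equation $$L_{n,2}\Big(\frac{1}{A_n(z)}L_{n,1}\Big)\phi_n(z)=\frac{A_{n-1}(z)}{z}\,\frac{\phi_{n-1}(0)\kappa_{n-1}}{\phi_n(0)\kappa_{n-2}}\,\phi_n(z).$$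
   Context: Let $w$ be a positive weight function on the unit circle normalized by $\int_{|\zeta|=1}w(\zeta)\frac{d\zeta}{i\zeta}=1$ (contour integrals counterclockwise), with orthonormal polynomials $\phi_n(z)=\kappa_nz^n+\cdots$, $\kappa_n>0$, $\int_{|\zeta|=1}\phi_m\overline{\phi_n}w\frac{d\zeta}{i\zeta}=\delta_{m,n}$. For $f(z)=\sum_{k=0}^na_kz^k$ of degree $n$, $f^*(z)=\sum_{k=0}^n\overline{a_k}z^{n-k}$. Let $v=-\log w$ and assume $w$ is differentiable in a neighborhood of the unit circle, has moments of all integral orders, and that $\int_{|\zeta|=1}\frac{v'(z)-v'(\zeta)}{z-\zeta}\zeta^mw(\zeta)\frac{d\zeta}{i\zeta}$ exists for all integers $m$. For $k\ge1$ with $\phi_k(0)\ne0$ define $$A_k(z)=k\frac{\kappa_{k-1}}{\kappa_k}+i\frac{\kappa_{k-1}}{\phi_k(0)}z\int_{|\zeta|=1}\frac{v'(z)-v'(\zeta)}{z-\zeta}\phi_k(\zeta)\overline{\phi_k^*(\zeta)}w(\zeta)\,d\zeta,$$ $$B_k(z)=-i\int_{|\zeta|=1}\frac{v'(z)-v'(\zeta)}{z-\zeta}\phi_k(\zeta)\Big[\overline{\phi_k(\zeta)}-\frac{\kappa_k}{\phi_k(0)}\overline{\phi_k^*(\zeta)}\Big]w(\zeta)\,d\zeta .$$ *)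

theory Defs
  imports "HOL-Complex_Analysis.Complex_Analysis"
begin

abbreviation ucirc :: "real \<Rightarrow> complex" where "ucirc \<equiv> circlepath 0 1"

text \<open>v' where v = - log w; for any local branch of log this is - w'/w.\<close>
definition vp :: "(complex \<Rightarrow> complex) \<Rightarrow> complex \<Rightarrow> complex" where
  "vp w z = - deriv w z / w z"

definition pstar :: "complex poly \<Rightarrow> complex poly" where
  "pstar p = reflect_poly (map_poly cnj p)"

text \<open>kappa_k, the (positive real) leading coefficient of phi_k.\<close>
definition kap :: "(nat \<Rightarrow> complex poly) \<Rightarrow> nat \<Rightarrow> real" where
  "kap phi k = Re (lead_coeff (phi k))"

definition Acoef :: "(complex \<Rightarrow> complex) \<Rightarrow> (nat \<Rightarrow> complex poly) \<Rightarrow> nat \<Rightarrow> complex \<Rightarrow> complex" where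
  "Acoef w phi k z =
     of_real (real k * kap phi (k - 1) / kap phi k)
     + \<i> * of_real (kap phi (k - 1)) / poly (phi k) 0 * z *
       contour_integral ucirc
         (\<lambda>\<zeta>. (vp w z - vp w \<zeta>) / (z - \<zeta>) * poly (phi k) \<zeta> * cnj (poly (pstar (phi k)) \<zeta>) * w \<zeta>)"

definition Bcoef :: "(complex \<Rightarrow> complex) \<Rightarrow> (nat \<Rightarrow> complex poly) \<Rightarrow> nat \<Rightarrow> complex \<Rightarrow> complex" where
  "Bcoef w phi k z =
     - \<i> * contour_integral ucirc
         (\<lambda>\<zeta>. (vp w z - vp w \<zeta>) / (z - \<zeta>) * poly (phi k) \<zeta> *
               (cnj (poly (phi k) \<zeta>) - of_real (kap phi k) / poly (phi k) 0 * cnj (poly (pstar (phi k)) \<zeta>))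
               * w \<zeta>)"

definition Lop1 :: "(complex \<Rightarrow> complex) \<Rightarrow> (nat \<Rightarrow> complex poly) \<Rightarrow> nat \<Rightarrow> (complex \<Rightarrow> complex) \<Rightarrow> complex \<Rightarrow> complex" where
  "Lop1 w phi n f z = deriv f z + Bcoef w phi n z * f z"

definition Lop2 :: "(complex \<Rightarrow> complex) \<Rightarrow> (nat \<Rightarrow> complex poly) \<Rightarrow> nat \<Rightarrow> (complex \<Rightarrow> complex) \<Rightarrow> complex \<Rightarrow> complex" where
  "Lop2 w phi n f z =
     - deriv f z - Bcoef w phi (n - 1) z * f z
     + Acoef w phi (n - 1) z * of_real (kap phi (n - 1)) / (z * of_real (kap phi (n - 2))) * f z
     + Acoef w phi (n - 1) z * of_real (kap phi n) * poly (phi (n - 1)) 0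
         / (of_real (kap phi (n - 2)) * poly (phi n) 0) * f z"

end

theory Submission
  imports Defs
begin

text \<open>
  Expand \<phi>_n' in the orthonormal basis. Integrating by parts over the unit circle, which is
  legitimate because w is holomorphic and zero-free near it, gives
  \<langle>\<phi>_n', \<phi>_k\<rangle> = \<langle>v' \<phi>_n, \<phi>_k\<rangle> + \<langle>\<phi>_n, \<zeta> (\<zeta> \<phi>_k)'\<rangle>, and the last term only contributes
  n \<kappa>_(n-1) / \<kappa>_n for k = n - 1. Subtracting v'(z) \<langle>\<phi>_n, \<phi>_k\<rangle> = 0, the remaining sum over k < n
  becomes the integral of the difference quotient of v' against the kernel
  \<Sum>_(k<n) \<phi>_k(z) cnj \<phi>_k(\<zeta>), which the Christoffel-Darboux formula expresses through
  \<phi>_n and \<phi>_n*; Szego's recursion then trades \<phi>_n*(z) for \<phi>_(n-1)(z). This gives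
  \<phi>_n' = A_n \<phi>_(n-1) - B_n \<phi>_n. The same identity for \<phi>_(n-1), with \<phi>_(n-2) eliminated by the
  three-term recurrence, is the equation for L_(n,2). Finally A_n is continuous, so
  L_(n,1) \<phi>_n / A_n coincides with \<phi>_(n-1) near every point where A_n does not vanish.
\<close>

lemma infinite_unit_sphere: "infinite (sphere (0::complex) 1)"
proof
  assume fin: "finite (sphere (0::complex) 1)"
  have "connected (sphere (0::complex) 1)"
    by (rule connected_sphere) simp
  then have "sphere (0::complex) 1 = {} \<or> (\<exists>a. sphere (0::complex) 1 = {a})"
    using fin connected_finite_iff_sing by blast
  moreover have "1 \<in> sphere (0::complex) 1" "-1 \<in> sphere (0::complex) 1"
    by auto
  ultimately show False
    by (metis empty_iff singletonD neg_equal_iff_equal one_neq_neg_one)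
qed

lemma poly_eqI_unit_sphere:
  fixes p q :: "complex poly"
  assumes "\<And>z. z \<in> sphere 0 1 \<Longrightarrow> poly p z = poly q z"
  shows "p = q"
proof (rule ccontr)
  assume "p \<noteq> q"
  then have "finite {z. poly (p - q) z = 0}"
    by (intro poly_roots_finite) simp
  moreover have "sphere 0 1 \<subseteq> {z. poly (p - q) z = 0}"
    using assms by auto
  ultimately show False
    using infinite_unit_sphere finite_subset by blast
qed

lemma cnj_unit_sphere: "z \<in> sphere (0::complex) 1 \<Longrightarrow> cnj z = inverse z"
  using divide_conv_cnj[of z 1] by (simp add: inverse_eq_divide)

lemma degree_map_poly_cnj [simp]: "degree (map_poly cnj p) = degree p"
  by (rule degree_map_poly) auto

lemma coeff_map_poly_cnj [simp]: "coeff (map_poly cnj p) n = cnj (coeff p n)"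
  by (rule coeff_map_poly) auto

lemma coeff_pstar:
  "coeff (pstar p) n = (if n > degree p then 0 else cnj (coeff p (degree p - n)))"
  unfolding pstar_def by (simp add: coeff_reflect_poly)

lemma degree_pstar_le: "degree (pstar p) \<le> degree p"
  unfolding pstar_def using degree_reflect_poly_le[of "map_poly cnj p"] by simp

lemma poly_pstar_unit_sphere:
  assumes "z \<in> sphere (0::complex) 1"
  shows "poly (pstar p) z = z ^ degree p * cnj (poly p z)"
proof -
  have "z \<noteq> 0"
    using assms by auto
  then have "poly (pstar p) z = z ^ degree p * poly (map_poly cnj p) (inverse z)"
    unfolding pstar_def by (metis poly_reflect_poly_nz degree_map_poly_cnj)
  also have "inverse z = cnj z"
    using cnj_unit_sphere[OF assms] by simp
  finally show ?thesis
    by (simp flip: poly_cnj)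
qed

lemma pderiv_map_poly_cnj: "pderiv (map_poly cnj p) = map_poly cnj (pderiv p)"
  by (rule poly_eqI) (simp add: coeff_pderiv)

lemma deriv_poly: "deriv (poly p) x = poly (pderiv p) x"
  by (rule DERIV_imp_deriv) (rule poly_DERIV)

lemma christoffel_darboux_step:
  fixes X Y X' Y' b c b' c' a a' k K :: "'a::field"
  assumes "K * X = k * b + a * Y" and "K * Y = k * c + a' * X"
    and "K * X' = k * b' + a' * Y'" and "K * Y' = k * c' + a * X'"
    and "K * K = k * k + a * a'" and "k \<noteq> 0"
  shows "Y * Y' - X * X' = c * c' - b * b'"
proof -
  have "k * k * (c * c' - b * b') = (k * c) * (k * c') - (k * b) * (k * b')"
    by (simp add: algebra_simps)
  also have "\<dots> = (K * Y - a' * X) * (K * Y' - a * X') - (K * X - a * Y) * (K * X' - a' * Y')"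
    using assms(1-4) by (simp add: algebra_simps)
  also have "\<dots> = (K * K - a * a') * (Y * Y' - X * X')"
    by (simp add: algebra_simps)
  also have "\<dots> = k * k * (Y * Y' - X * X')"
    using assms(5) by simp
  finally show ?thesis
    using assms(6) by simp
qed

text \<open>The kernel (v'(z) - v'(\<zeta>)) / (z - \<zeta>) of A_k and B_k, continued along the diagonal.\<close>

definition dquot :: "(complex \<Rightarrow> complex) \<Rightarrow> complex \<Rightarrow> complex \<Rightarrow> complex" where
  "dquot f x y = (if y = x then deriv f x else (f x - f y) / (x - y))"

lemma dquot_near_diagonal:
  assumes U: "open U" and f: "f holomorphic_on U" and "a \<in> U" and "e > 0"
  obtains d where "d > 0"
    and "\<And>x y. x \<in> ball a d \<Longrightarrow> y \<in> ball a d \<Longrightarrow> norm (dquot f x y - deriv f a) \<le> e"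
proof -
  have "isCont (deriv f) a"
    using holomorphic_deriv[OF f U] U \<open>a \<in> U\<close>
    by (meson holomorphic_on_imp_continuous_on continuous_on_eq_continuous_at)
  then obtain d1 where "d1 > 0" and d1: "\<And>x. dist x a < d1 \<Longrightarrow> dist (deriv f x) (deriv f a) < e"
    using \<open>e > 0\<close> unfolding continuous_at_eps_delta by blast
  obtain d2 where "d2 > 0" and "ball a d2 \<subseteq> U"
    using U \<open>a \<in> U\<close> openE by blast
  define d where "d = min d1 d2"
  have small: "norm (deriv f x - deriv f a) \<le> e" if "x \<in> ball a d" for x
    using d1[of x] that by (simp add: d_def dist_norm norm_minus_commute)
  have "norm (dquot f x y - deriv f a) \<le> e" if x: "x \<in> ball a d" and y: "y \<in> ball a d" for x y
  proof (cases "y = x")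
    case True
    then show ?thesis
      using small[OF x] by (simp add: dquot_def)
  next
    case False
    have "norm ((f x - deriv f a * x) - (f y - deriv f a * y)) \<le> e * norm (x - y)"
    proof (rule field_differentiable_bound[OF convex_ball _ small x y])
      fix z assume "z \<in> ball a d"
      then have "z \<in> U"
        using \<open>ball a d2 \<subseteq> U\<close> by (auto simp: d_def)
      show "((\<lambda>z. f z - deriv f a * z) has_field_derivative deriv f z - deriv f a) (at z within ball a d)"
        by (auto intro!: derivative_eq_intros holomorphic_derivI[OF f U \<open>z \<in> U\<close>])
    qed
    also have "(f x - deriv f a * x) - (f y - deriv f a * y) = (dquot f x y - deriv f a) * (x - y)"
      using False by (simp add: dquot_def field_simps)
    finally show ?thesis
      using False by (simp add: norm_mult)
  qed
  moreover have "d > 0"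
    using \<open>d1 > 0\<close> \<open>d2 > 0\<close> by (simp add: d_def)
  ultimately show ?thesis
    using that by blast
qed

lemma continuous_on_dquot:
  assumes U: "open U" and f: "f holomorphic_on U"
  shows "continuous_on (U \<times> U) (\<lambda>(x, y). dquot f x y)"
proof -
  have "isCont (\<lambda>(x, y). dquot f x y) (a, b)" if "a \<in> U" "b \<in> U" for a b
  proof (cases "b = a")
    case True
    show ?thesis
      unfolding continuous_at_eps_delta
    proof (intro allI impI)
      fix e :: real assume "e > 0"
      then obtain d where "d > 0"
        and d: "\<And>x y. x \<in> ball a d \<Longrightarrow> y \<in> ball a d \<Longrightarrow> norm (dquot f x y - deriv f a) \<le> e / 2"
        using dquot_near_diagonal[OF U f \<open>a \<in> U\<close>, of "e / 2"] by auto
      have "dist (dquot f x y) (dquot f a b) < e" if "dist (x, y) (a, b) < d" for x y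
      proof -
        have "x \<in> ball a d" "y \<in> ball a d"
          using that True dist_fst_le[of "(x, y)" "(a, b)"] dist_snd_le[of "(x, y)" "(a, b)"]
          by (auto simp: dist_commute)
        then show ?thesis
          using d[of x y] \<open>e > 0\<close> True by (simp add: dist_norm dquot_def)
      qed
      with \<open>d > 0\<close> show "\<exists>d>0. \<forall>p. dist p (a, b) < d \<longrightarrow>
          dist ((\<lambda>(x, y). dquot f x y) p) ((\<lambda>(x, y). dquot f x y) (a, b)) < e"
        by auto
    qed
  next
    case False
    have "continuous_on U f"
      using f holomorphic_on_imp_continuous_on by blast
    then have "isCont f a" "isCont f b"
      using U that continuous_on_eq_continuous_at by blast+
    then have "isCont (\<lambda>p. f (fst p)) (a, b)" "isCont (\<lambda>p. f (snd p)) (a, b)"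
      by (auto intro: isCont_o2[OF isCont_fst[OF continuous_ident]] isCont_o2[OF isCont_snd[OF continuous_ident]])
    then have "isCont (\<lambda>p. (f (fst p) - f (snd p)) / (fst p - snd p)) (a, b)"
      using False by (intro isCont_divide isCont_diff isCont_fst isCont_snd continuous_ident) auto
    moreover have "open {p :: complex \<times> complex. fst p \<noteq> snd p}"
      by (intro open_Collect_neq continuous_intros)
    then have "\<forall>\<^sub>F p in nhds (a, b). fst p \<noteq> snd p"
      using False eventually_nhds_in_open by fastforce
    then have "\<forall>\<^sub>F p in nhds (a, b). (\<lambda>(x, y). dquot f x y) p = (f (fst p) - f (snd p)) / (fst p - snd p)"
      by eventually_elim (auto simp: dquot_def)
    ultimately show ?thesis
      using isCont_cong[where g = "\<lambda>p. (f (fst p) - f (snd p)) / (fst p - snd p)"] by blast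
  qed
  then show ?thesis
    by (auto simp: continuous_on_eq_continuous_at[OF open_Times[OF U U]])
qed

lemma continuous_on_contour_integral_circlepath:
  fixes F :: "'a::topological_space \<Rightarrow> complex \<Rightarrow> complex"
  assumes F: "continuous_on (U \<times> sphere c r) (\<lambda>(x, \<zeta>). F x \<zeta>)" and "r \<ge> 0"
  shows "continuous_on U (\<lambda>x. contour_integral (circlepath c r) (F x))"
proof -
  define g where "g t = 2 * pi * \<i> * r * exp (2 * pi * \<i> * t)" for t :: real
  have "contour_integral (circlepath c r) (F x) = integral (cbox 0 1) (\<lambda>t. F x (circlepath c r t) * g t)" for x
    by (simp add: contour_integral_integral vector_derivative_circlepath g_def)
  moreover have "continuous_on (U \<times> cbox 0 1) (\<lambda>(x, t). F x (circlepath c r t) * g t)"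
  proof -
    have "(\<lambda>(x, t). (x, circlepath c r t)) ` (U \<times> cbox 0 1) \<subseteq> U \<times> sphere c r"
      using \<open>r \<ge> 0\<close> by (auto simp: sphere_def dist_norm circlepath norm_mult)
    moreover have "continuous_on (U \<times> cbox 0 1) (\<lambda>p. circlepath c r (snd p))"
      using path_circlepath[of c r] unfolding path_def
      by (rule continuous_on_compose2) (auto intro: continuous_on_snd)
    then have "continuous_on (U \<times> cbox 0 1) (\<lambda>(x, t). (x, circlepath c r t))"
      unfolding split_def by (intro continuous_intros)
    ultimately have "continuous_on (U \<times> cbox 0 1) (\<lambda>(x, t). F x (circlepath c r t))"
      using continuous_on_compose2[OF F, of "U \<times> cbox 0 1" "\<lambda>(x, t). (x, circlepath c r t)"]
      by (simp add: split_def)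
    then show ?thesis
      unfolding g_def split_def by (intro continuous_intros) auto
  qed
  ultimately show ?thesis
    using integral_continuous_on_param by (simp only:)
qed

lemma contour_integral_dquot:
  assumes "simple_path g"
  shows "contour_integral g (\<lambda>\<zeta>. (f x - f \<zeta>) / (x - \<zeta>) * h \<zeta>) =
    contour_integral g (\<lambda>\<zeta>. dquot f x \<zeta> * h \<zeta>)"
  by (rule contour_integral_spike_finite_simple_path[of "{x}"]) (use assms in \<open>auto simp: dquot_def\<close>)

lemma dquot_mult_diff: "f y - f x = dquot f x y * (y - x)"
  by (simp add: dquot_def field_simps)

locale opuc =
  fixes w :: "complex \<Rightarrow> complex" and phi :: "nat \<Rightarrow> complex poly"
  assumes w_cont: "continuous_on (sphere 0 1) w"
    and phi_deg: "\<forall>k. degree (phi k) = k"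
    and phi_lead: "\<forall>k. Im (lead_coeff (phi k)) = 0 \<and> Re (lead_coeff (phi k)) > 0"
    and phi_orth: "\<forall>j k. contour_integral ucirc
        (\<lambda>\<zeta>. poly (phi j) \<zeta> * cnj (poly (phi k) \<zeta>) * w \<zeta> / (\<i> * \<zeta>)) = (if j = k then 1 else 0)"
begin

definition ip :: "complex poly \<Rightarrow> complex poly \<Rightarrow> complex" where
  "ip p q = contour_integral ucirc (\<lambda>\<zeta>. poly p \<zeta> * cnj (poly q \<zeta>) * w \<zeta> / (\<i> * \<zeta>))"

abbreviation kc :: "nat \<Rightarrow> complex" where
  "kc k \<equiv> complex_of_real (kap phi k)"

lemma path_image_ucirc [simp]: "path_image ucirc = sphere 0 1"
  by (simp add: path_image_circlepath_nonneg)

lemma contour_integrable_ucirc: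
  "continuous_on (sphere 0 1) f \<Longrightarrow> f contour_integrable_on ucirc"
  by (rule contour_integrable_continuous_circlepath) simp

lemma ip_integrable:
  "(\<lambda>\<zeta>. poly p \<zeta> * cnj (poly q \<zeta>) * w \<zeta> / (\<i> * \<zeta>)) contour_integrable_on ucirc"
  by (rule contour_integrable_ucirc) (auto intro!: continuous_intros w_cont)

lemma ip_phi_phi: "ip (phi j) (phi k) = (if j = k then 1 else 0)"
  using phi_orth unfolding ip_def by blast

lemma degree_phi [simp]: "degree (phi k) = k"
  using phi_deg by blast

lemma coeff_phi_self: "coeff (phi k) k = kc k"
  using phi_lead unfolding kap_def by (simp add: complex_eq_iff)

lemma coeff_phi_above: "k < m \<Longrightarrow> coeff (phi k) m = 0"
  by (simp add: coeff_eq_0)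

lemma kap_pos: "kap phi k > 0"
  using phi_lead unfolding kap_def by blast

lemma kap_nonzero [simp]: "kap phi k \<noteq> 0" and kc_nonzero [simp]: "kc k \<noteq> 0"
  using kap_pos[of k] by auto

lemma phi_nonzero: "phi k \<noteq> 0"
  using coeff_phi_self[of k] kc_nonzero[of k] by (metis coeff_0)

lemma ip_0_left [simp]: "ip 0 r = 0" and ip_0_right [simp]: "ip r 0 = 0"
  unfolding ip_def by simp_all

lemma ip_add_left: "ip (p + q) r = ip p r + ip q r"
proof -
  have "ip (p + q) r = contour_integral ucirc
      (\<lambda>\<zeta>. poly p \<zeta> * cnj (poly r \<zeta>) * w \<zeta> / (\<i> * \<zeta>) + poly q \<zeta> * cnj (poly r \<zeta>) * w \<zeta> / (\<i> * \<zeta>))"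
    unfolding ip_def by (simp add: algebra_simps add_divide_distrib)
  then show ?thesis
    unfolding ip_def by (simp add: contour_integral_add ip_integrable)
qed

lemma ip_smult_left: "ip (smult c p) r = c * ip p r"
proof -
  have "ip (smult c p) r = contour_integral ucirc
      (\<lambda>\<zeta>. c * (poly p \<zeta> * cnj (poly r \<zeta>) * w \<zeta> / (\<i> * \<zeta>)))"
    unfolding ip_def by (simp add: algebra_simps)
  also have "\<dots> = c * ip p r"
    unfolding ip_def by (rule contour_integral_lmul[OF ip_integrable])
  finally show ?thesis .
qed

lemma ip_diff_left: "ip (p - q) r = ip p r - ip q r"
  using ip_add_left[of "p - q" q r] by simp

lemma ip_sum_left: "ip (\<Sum>k\<in>A. f k) r = (\<Sum>k\<in>A. ip (f k) r)"
  by (induction A rule: infinite_finite_induct) (auto simp: ip_add_left)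

lemma ip_add_right: "ip r (p + q) = ip r p + ip r q"
proof -
  have "ip r (p + q) = contour_integral ucirc
      (\<lambda>\<zeta>. poly r \<zeta> * cnj (poly p \<zeta>) * w \<zeta> / (\<i> * \<zeta>) + poly r \<zeta> * cnj (poly q \<zeta>) * w \<zeta> / (\<i> * \<zeta>))"
    unfolding ip_def by (simp add: algebra_simps add_divide_distrib)
  then show ?thesis
    unfolding ip_def by (simp add: contour_integral_add ip_integrable)
qed

lemma ip_smult_right: "ip r (smult c p) = cnj c * ip r p"
proof -
  have "ip r (smult c p) = contour_integral ucirc
      (\<lambda>\<zeta>. cnj c * (poly r \<zeta> * cnj (poly p \<zeta>) * w \<zeta> / (\<i> * \<zeta>)))"
    unfolding ip_def by (simp add: algebra_simps)
  also have "\<dots> = cnj c * ip r p"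
    unfolding ip_def by (rule contour_integral_lmul[OF ip_integrable])
  finally show ?thesis .
qed

lemma ip_sum_right: "ip r (\<Sum>k\<in>A. f k) = (\<Sum>k\<in>A. ip r (f k))"
  by (induction A rule: infinite_finite_induct) (auto simp: ip_add_right)

lemma phi_span: "degree p \<le> m \<Longrightarrow> \<exists>c. p = (\<Sum>k\<le>m. smult (c k) (phi k))"
proof (induction m arbitrary: p)
  case 0
  then obtain a where "p = [:a:]"
    by (metis degree_eq_zeroE le_zero_eq)
  moreover have "phi 0 = [:kc 0:]"
    by (metis coeff_phi_self degree_phi degree_eq_zeroE coeff_pCons_0)
  ultimately have "p = smult (a / kc 0) (phi 0)"
    by simp
  then show ?case
    by (intro exI[of _ "\<lambda>_. a / kc 0"]) simp
next
  case (Suc m)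
  define a where "a = coeff p (Suc m) / kc (Suc m)"
  define p' where "p' = p - smult a (phi (Suc m))"
  have "degree p' \<le> Suc m"
    unfolding p'_def using Suc.prems by (intro degree_diff_le) auto
  moreover have "coeff p' (Suc m) = 0"
    unfolding p'_def a_def by (simp add: coeff_phi_self)
  ultimately have "degree p' \<le> m"
    by (metis Suc_leI degree_le le_antisym linorder_neqE_nat coeff_eq_0 not_less_eq_eq)
  then obtain c where "p' = (\<Sum>k\<le>m. smult (c k) (phi k))"
    using Suc.IH by blast
  then have "p = (\<Sum>k\<le>Suc m. smult ((c(Suc m := a)) k) (phi k))"
    unfolding p'_def by (simp add: algebra_simps)
  then show ?case
    by blast
qed

lemma phi_expansion:
  assumes "degree p \<le> m"
  shows "p = (\<Sum>k\<le>m. smult (ip p (phi k)) (phi k))"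
proof -
  obtain c where c: "p = (\<Sum>k\<le>m. smult (c k) (phi k))"
    using phi_span[OF assms] by blast
  have "ip p (phi j) = c j" if "j \<le> m" for j
  proof -
    have "ip p (phi j) = (\<Sum>k\<le>m. c k * (if k = j then 1 else 0))"
      by (subst c) (simp add: ip_sum_left ip_smult_left ip_phi_phi)
    also have "\<dots> = (\<Sum>k\<le>m. if k = j then c j else 0)"
      by (intro sum.cong) auto
    finally show ?thesis
      using that by simp
  qed
  then show ?thesis
    by (subst c) (auto intro!: sum.cong)
qed

lemma ip_phi_right:
  assumes "degree r \<le> n"
  shows "ip r (phi n) = coeff r n / kc n"
proof -
  have "coeff r n = (\<Sum>k\<le>n. ip r (phi k) * coeff (phi k) n)"
    by (subst phi_expansion[OF assms]) (simp add: coeff_sum)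
  also have "\<dots> = (\<Sum>k\<le>n. if k = n then ip r (phi n) * kc n else 0)"
    by (intro sum.cong) (auto simp: coeff_phi_self coeff_phi_above)
  also have "\<dots> = ip r (phi n) * kc n"
    by simp
  finally show ?thesis
    by simp
qed

lemma ip_phi_left:
  assumes "degree r \<le> n"
  shows "ip (phi n) r = cnj (coeff r n) / kc n"
proof -
  have "ip (phi n) r = (\<Sum>k\<le>n. cnj (ip r (phi k)) * (if n = k then 1 else 0))"
    by (subst phi_expansion[OF assms]) (simp add: ip_sum_right ip_smult_right ip_phi_phi)
  also have "\<dots> = (\<Sum>k\<le>n. if k = n then cnj (ip r (phi n)) else 0)"
    by (intro sum.cong) auto
  also have "\<dots> = cnj (ip r (phi n))"
    by simp
  finally show ?thesis
    using ip_phi_right[OF assms] by simp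
qed

lemma ip_phi_right_eq_0: "degree r < n \<Longrightarrow> ip r (phi n) = 0"
  by (simp add: ip_phi_right coeff_eq_0)

lemma ip_pCons_0: "ip (pCons 0 p) (pCons 0 q) = ip p q"
  unfolding ip_def
proof (rule contour_integral_eq)
  fix z assume "z \<in> path_image ucirc"
  then have "cnj z = inverse z" "z \<noteq> 0"
    using cnj_unit_sphere by auto
  then show "poly (pCons 0 p) z * cnj (poly (pCons 0 q) z) * w z / (\<i> * z) =
      poly p z * cnj (poly q z) * w z / (\<i> * z)"
    by (simp add: field_simps)
qed

lemma ip_pstar_phi_pCons_0:
  assumes "degree s < n"
  shows "ip (pstar (phi n)) (pCons 0 s) = 0"
proof -
  define u where "u = monom 1 (n - 1 - degree s) * pstar s"
  have "degree u < n"
    unfolding u_def using assms degree_pstar_le[of s]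
    by (intro le_less_trans[OF degree_mult_le]) (simp add: degree_monom_eq)
  have "ip (pstar (phi n)) (pCons 0 s) = ip u (phi n)"
    unfolding ip_def
  proof (rule contour_integral_eq)
    fix z assume "z \<in> path_image ucirc"
    then have z: "z \<in> sphere 0 1"
      by simp
    then have "cnj z = inverse z" "z \<noteq> 0"
      using cnj_unit_sphere by auto
    moreover have "z ^ n = z * z ^ (n - 1 - degree s) * z ^ degree s"
      using assms by (simp flip: power_Suc power_add)
    ultimately show "poly (pstar (phi n)) z * cnj (poly (pCons 0 s) z) * w z / (\<i> * z) =
        poly u z * cnj (poly (phi n) z) * w z / (\<i> * z)"
      unfolding u_def using z by (simp add: poly_pstar_unit_sphere poly_monom field_simps)
  qed
  also have "\<dots> = 0"
    using \<open>degree u < n\<close> by (rule ip_phi_right_eq_0)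
  finally show ?thesis .
qed

lemma szego_recursion:
  assumes "n \<ge> 1"
  shows "smult (kc n) (phi n) =
    smult (kc (n - 1)) (pCons 0 (phi (n - 1))) + smult (poly (phi n) 0) (pstar (phi n))"
proof -
  define R where "R = smult (kc n) (phi n) - smult (poly (phi n) 0) (pstar (phi n))"
  obtain c R1 where R: "R = pCons c R1"
    by (cases R)
  have "c = coeff R 0"
    using R by simp
  also have "\<dots> = 0"
    by (simp add: R_def coeff_pstar poly_0_coeff_0 coeff_phi_self)
  finally have R: "R = pCons 0 R1"
    using R by simp
  have "degree R \<le> n"
    unfolding R_def using degree_pstar_le[of "phi n"]
    by (intro degree_diff_le) (auto intro: order.trans[OF degree_smult_le])
  then have deg_R1: "degree R1 \<le> n - 1"
    using R by (cases "R1 = 0") auto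
  have ip_R1: "ip R1 (phi k) = (if k = n - 1 then kc (n - 1) else 0)" if "k \<le> n - 1" for k
  proof -
    have "degree (pCons 0 (phi k)) \<le> n"
      using that assms by (simp add: phi_nonzero)
    have "ip R1 (phi k) = ip R (pCons 0 (phi k))"
      using R by (simp add: ip_pCons_0)
    also have "\<dots> = kc n * ip (phi n) (pCons 0 (phi k))"
      unfolding R_def using that assms
      by (simp add: ip_diff_left ip_smult_left ip_pstar_phi_pCons_0)
    also have "\<dots> = cnj (coeff (pCons 0 (phi k)) n)"
      by (simp add: ip_phi_left[OF \<open>degree (pCons 0 (phi k)) \<le> n\<close>])
    also have "coeff (pCons 0 (phi k)) n = coeff (phi k) (n - 1)"
      using assms by (cases n) auto
    finally show ?thesis
      using that by (auto simp: coeff_phi_self coeff_phi_above)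
  qed
  have "R1 = (\<Sum>k\<le>n - 1. smult (ip R1 (phi k)) (phi k))"
    by (rule phi_expansion[OF deg_R1])
  also have "\<dots> = (\<Sum>k\<le>n - 1. if k = n - 1 then smult (kc (n - 1)) (phi (n - 1)) else 0)"
    by (intro sum.cong) (auto simp: ip_R1)
  also have "\<dots> = smult (kc (n - 1)) (phi (n - 1))"
    by simp
  finally show ?thesis
    using R unfolding R_def by (simp add: algebra_simps)
qed

lemma poly_szego_recursion:
  "n \<ge> 1 \<Longrightarrow> kc n * poly (phi n) z =
     kc (n - 1) * (z * poly (phi (n - 1)) z) + poly (phi n) 0 * poly (pstar (phi n)) z"
  using arg_cong[OF szego_recursion, of n "\<lambda>p. poly p z"] by simp

lemma kappa_recursion:
  assumes "n \<ge> 1"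
  shows "kc n * kc n = kc (n - 1) * kc (n - 1) + poly (phi n) 0 * cnj (poly (phi n) 0)"
  using arg_cong[OF szego_recursion[OF assms], of "\<lambda>p. coeff p n"] assms
  by (cases n) (simp_all add: coeff_pstar coeff_phi_self poly_0_coeff_0)

lemma szego_recursion_pstar:
  assumes "n \<ge> 1"
  shows "smult (kc n) (pstar (phi n)) =
    smult (kc (n - 1)) (pstar (phi (n - 1))) + smult (cnj (poly (phi n) 0)) (phi n)"
proof (rule poly_eqI_unit_sphere)
  fix z :: complex assume z: "z \<in> sphere 0 1"
  then have cz: "cnj z = inverse z" and "z \<noteq> 0"
    using cnj_unit_sphere by auto
  obtain m where m: "n = Suc m"
    using assms by (cases n) auto
  define a where "a = poly (phi n) 0"
  have "cnj (kc n * poly (phi n) z) =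
      cnj (kc m * (z * poly (phi m) z) + a * (z ^ n * cnj (poly (phi n) z)))"
    using poly_szego_recursion[OF assms, of z] m by (simp add: a_def poly_pstar_unit_sphere[OF z])
  then have "kc n * cnj (poly (phi n) z) =
      kc m * (inverse z * cnj (poly (phi m) z)) + cnj a * (inverse z ^ n * poly (phi n) z)"
    by (simp add: cz)
  then have "z ^ n * (kc n * cnj (poly (phi n) z)) =
      kc m * (z ^ m * cnj (poly (phi m) z)) + cnj a * poly (phi n) z"
    using \<open>z \<noteq> 0\<close> m by (simp add: field_simps power_inverse)
  then show "poly (smult (kc n) (pstar (phi n))) z =
      poly (smult (kc (n - 1)) (pstar (phi (n - 1))) + smult (cnj (poly (phi n) 0)) (phi n)) z"
    using m by (simp add: a_def poly_pstar_unit_sphere[OF z] algebra_simps)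
qed

lemma poly_szego_recursion_pstar:
  "n \<ge> 1 \<Longrightarrow> kc n * poly (pstar (phi n)) z =
     kc (n - 1) * poly (pstar (phi (n - 1))) z + cnj (poly (phi n) 0) * poly (phi n) z"
  using arg_cong[OF szego_recursion_pstar, of n "\<lambda>p. poly p z"] by simp

lemma pstar_phi_0: "pstar (phi 0) = phi 0"
proof (rule poly_eqI)
  fix i
  show "coeff (pstar (phi 0)) i = coeff (phi 0) i"
    by (cases i) (auto simp: coeff_pstar coeff_phi_self coeff_phi_above)
qed

lemma christoffel_darboux:
  "(1 - z * cnj \<zeta>) * (\<Sum>k<n. poly (phi k) z * cnj (poly (phi k) \<zeta>)) =
     poly (pstar (phi n)) z * cnj (poly (pstar (phi n)) \<zeta>) - poly (phi n) z * cnj (poly (phi n) \<zeta>)"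
proof (induction n)
  case 0
  show ?case
    by (simp add: pstar_phi_0)
next
  case (Suc m)
  define a where "a = poly (phi (Suc m)) 0"
  have "kc (Suc m) * poly (phi (Suc m)) z = kc m * (z * poly (phi m) z) + a * poly (pstar (phi (Suc m))) z"
    and "kc (Suc m) * poly (pstar (phi (Suc m))) z = kc m * poly (pstar (phi m)) z + cnj a * poly (phi (Suc m)) z"
    and "kc (Suc m) * cnj (poly (phi (Suc m)) \<zeta>) =
      kc m * cnj (\<zeta> * poly (phi m) \<zeta>) + cnj a * cnj (poly (pstar (phi (Suc m))) \<zeta>)"
    and "kc (Suc m) * cnj (poly (pstar (phi (Suc m))) \<zeta>) =
      kc m * cnj (poly (pstar (phi m)) \<zeta>) + a * cnj (poly (phi (Suc m)) \<zeta>)"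
    and "kc (Suc m) * kc (Suc m) = kc m * kc m + a * cnj a"
    using poly_szego_recursion[of "Suc m" z] poly_szego_recursion_pstar[of "Suc m" z]
      arg_cong[OF poly_szego_recursion[of "Suc m" \<zeta>], of cnj]
      arg_cong[OF poly_szego_recursion_pstar[of "Suc m" \<zeta>], of cnj]
      kappa_recursion[of "Suc m"]
    by (simp_all add: a_def)
  then have "poly (pstar (phi (Suc m))) z * cnj (poly (pstar (phi (Suc m))) \<zeta>)
      - poly (phi (Suc m)) z * cnj (poly (phi (Suc m)) \<zeta>)
    = poly (pstar (phi m)) z * cnj (poly (pstar (phi m)) \<zeta>)
      - (z * poly (phi m) z) * cnj (\<zeta> * poly (phi m) \<zeta>)"
    by (rule christoffel_darboux_step) simp
  moreover have "(1 - z * cnj \<zeta>) * (\<Sum>k<Suc m. poly (phi k) z * cnj (poly (phi k) \<zeta>)) =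
      (1 - z * cnj \<zeta>) * (\<Sum>k<m. poly (phi k) z * cnj (poly (phi k) \<zeta>))
      + (1 - z * cnj \<zeta>) * (poly (phi m) z * cnj (poly (phi m) \<zeta>))"
    by (simp add: algebra_simps)
  moreover note Suc.IH
  ultimately show ?case
    by (simp only:) (simp add: algebra_simps)
qed

lemma three_term_recurrence:
  assumes "n \<ge> 2"
  shows "poly (phi (n - 1)) 0 * kc (n - 1) * poly (phi n) x =
    kc n * poly (phi (n - 1)) 0 * x * poly (phi (n - 1)) x
    + kc (n - 1) * poly (phi n) 0 * poly (phi (n - 1)) x
    - kc (n - 2) * poly (phi n) 0 * x * poly (phi (n - 2)) x"
proof -
  define a b where "a = poly (phi n) 0" and "b = poly (phi (n - 1)) 0"
  have "n - 1 \<ge> 1" and nn: "n - 1 - 1 = n - 2"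
    using assms by auto
  have e1: "kc n * poly (phi n) x = kc (n - 1) * (x * poly (phi (n - 1)) x) + a * poly (pstar (phi n)) x"
    and e2: "kc (n - 1) * poly (phi (n - 1)) x =
      kc (n - 2) * (x * poly (phi (n - 2)) x) + b * poly (pstar (phi (n - 1))) x"
    and e3: "kc n * poly (pstar (phi n)) x = kc (n - 1) * poly (pstar (phi (n - 1))) x + cnj a * poly (phi n) x"
    and e4: "kc n * kc n = kc (n - 1) * kc (n - 1) + a * cnj a"
    using assms poly_szego_recursion[of n x] poly_szego_recursion[OF \<open>n - 1 \<ge> 1\<close>, of x]
      poly_szego_recursion_pstar[of n x] kappa_recursion[of n]
    unfolding nn by (simp_all add: a_def b_def)
  \<comment> \<open>eliminate the two reversed polynomials between e1, e2 and e3\<close>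
  have "kc n * b * (kc n * poly (phi n) x - kc (n - 1) * (x * poly (phi (n - 1)) x))
      = kc (n - 1) * a * (kc (n - 1) * poly (phi (n - 1)) x - kc (n - 2) * (x * poly (phi (n - 2)) x))
        + a * cnj a * b * poly (phi n) x"
    using arg_cong[OF e3, of "\<lambda>t. a * b * t"] e1 e2 by (simp add: algebra_simps)
  then have "kc (n - 1) * (b * kc (n - 1) * poly (phi n) x) = kc (n - 1) *
      (kc n * b * x * poly (phi (n - 1)) x + kc (n - 1) * a * poly (phi (n - 1)) x
       - kc (n - 2) * a * x * poly (phi (n - 2)) x)"
    using e4 by (simp add: algebra_simps)
  then show ?thesis
    by (simp add: a_def b_def)
qed

lemma ip_phi_pCons_pderiv:
  assumes "k < n"
  shows "ip (phi n) (pCons 0 (pderiv (pCons 0 (phi k)))) =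
    (if k = n - 1 then of_nat n * kc (n - 1) / kc n else 0)"
proof -
  have "degree (pderiv (pCons 0 (phi k))) \<le> k"
    by (metis degree_phi degree_pCons_le degree_pderiv diff_Suc_1 diff_le_mono)
  then have "degree (pCons 0 (pderiv (pCons 0 (phi k)))) \<le> n"
    using assms by (metis Suc_le_eq degree_pCons_le le_trans Suc_le_mono)
  moreover have "coeff (pCons 0 (pderiv (pCons 0 (phi k)))) n = of_nat n * coeff (phi k) (n - 1)"
    using assms by (cases n) (simp_all add: coeff_pderiv)
  ultimately show ?thesis
    using assms by (auto simp: ip_phi_left coeff_phi_self coeff_phi_above)
qed

end

locale opuc_holomorphic = opuc +
  fixes S :: "complex set"
  assumes S_open: "open S" and circ_S: "sphere 0 1 \<subseteq> S"
    and w_holo: "w holomorphic_on S" and w_nz: "\<forall>x\<in>S. w x \<noteq> 0"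
begin

lemma vp_holomorphic: "vp w holomorphic_on S"
proof -
  have "(\<lambda>z. - deriv w z / w z) holomorphic_on S"
    using holomorphic_deriv[OF w_holo S_open] w_holo w_nz S_open by (intro holomorphic_intros) auto
  then show ?thesis
    unfolding vp_def[abs_def] .
qed

lemma continuous_on_vp: "continuous_on (sphere 0 1) (vp w)"
  using vp_holomorphic circ_S holomorphic_on_imp_continuous_on continuous_on_subset by blast

lemma continuous_on_dquot_vp:
  assumes "x \<in> S"
  shows "continuous_on (sphere 0 1) (dquot (vp w) x)"
proof -
  have "continuous_on (sphere 0 1) ((\<lambda>(x, y). dquot (vp w) x y) \<circ> Pair x)"
    using continuous_on_dquot[OF S_open vp_holomorphic] assms circ_S
    by (intro continuous_on_compose continuous_intros) (auto elim: continuous_on_subset)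
  then show ?thesis
    by (simp add: o_def)
qed

definition ip_vp :: "complex poly \<Rightarrow> complex poly \<Rightarrow> complex" where
  "ip_vp p q = contour_integral ucirc (\<lambda>\<zeta>. vp w \<zeta> * poly p \<zeta> * cnj (poly q \<zeta>) * w \<zeta> / (\<i> * \<zeta>))"

lemma ip_vp_integrable:
  "(\<lambda>\<zeta>. vp w \<zeta> * poly p \<zeta> * cnj (poly q \<zeta>) * w \<zeta> / (\<i> * \<zeta>)) contour_integrable_on ucirc"
  by (rule contour_integrable_ucirc) (auto intro!: continuous_intros w_cont continuous_on_vp)

lemma contour_integral_exact_ucirc:
  "contour_integral ucirc (\<lambda>\<zeta>. (poly (pderiv p) \<zeta> * poly r (inverse \<zeta>)
      - poly p \<zeta> * poly (pderiv r) (inverse \<zeta>) * inverse \<zeta> ^ 2) * w \<zeta>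
      + poly p \<zeta> * poly r (inverse \<zeta>) * deriv w \<zeta>) = 0"
proof -
  have "((\<lambda>x. poly p x * poly r (inverse x) * w x) has_field_derivative
      (poly (pderiv p) x * poly r (inverse x) - poly p x * poly (pderiv r) (inverse x) * inverse x ^ 2) * w x
      + poly p x * poly r (inverse x) * deriv w x) (at x within S - {0})"
    if "x \<in> S - {0}" for x
  proof -
    have "x \<in> S" "x \<noteq> 0"
      using that by auto
    have "((\<lambda>x. poly r (inverse x)) has_field_derivative
        poly (pderiv r) (inverse x) * - (inverse x ^ 2)) (at x within S - {0})"
      using DERIV_chain2[OF poly_DERIV DERIV_inverse[OF \<open>x \<noteq> 0\<close>]]
      by (simp add: eval_nat_numeral has_field_derivative_at_within)
    from DERIV_mult[OF DERIV_mult[OF has_field_derivative_at_within[OF poly_DERIV] this]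
        holomorphic_derivI[OF w_holo S_open \<open>x \<in> S\<close>]]
    show ?thesis
      by (simp add: algebra_simps)
  qed
  then have "((\<lambda>\<zeta>. (poly (pderiv p) \<zeta> * poly r (inverse \<zeta>)
      - poly p \<zeta> * poly (pderiv r) (inverse \<zeta>) * inverse \<zeta> ^ 2) * w \<zeta>
      + poly p \<zeta> * poly r (inverse \<zeta>) * deriv w \<zeta>) has_contour_integral 0) ucirc"
    by (rule Cauchy_theorem_primitive) (use circ_S in auto)
  then show ?thesis
    by (rule contour_integral_unique)
qed

lemma ip_pderiv_left: "ip (pderiv p) q = ip_vp p q + ip p (pCons 0 (pderiv (pCons 0 q)))"
proof -
  define Q where "Q = pCons 0 q"
  define A1 A2 A3 where
    "A1 \<zeta> = poly (pderiv p) \<zeta> * cnj (poly q \<zeta>) * w \<zeta> / (\<i> * \<zeta>)" and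
    "A2 \<zeta> = vp w \<zeta> * poly p \<zeta> * cnj (poly q \<zeta>) * w \<zeta> / (\<i> * \<zeta>)" and
    "A3 \<zeta> = poly p \<zeta> * cnj (poly (pCons 0 (pderiv Q)) \<zeta>) * w \<zeta> / (\<i> * \<zeta>)" for \<zeta>
  have A: "A1 contour_integrable_on ucirc" "A2 contour_integrable_on ucirc" "A3 contour_integrable_on ucirc"
    unfolding A1_def A2_def A3_def by (rule ip_integrable ip_vp_integrable)+
  \<comment> \<open>On the circle cnj (Q \<zeta>) = r (1 / \<zeta>), with r the polynomial with conjugated
      coefficients; this extends holomorphically off the circle.\<close>
  let ?r = "map_poly cnj Q"
  have pointwise: "(poly (pderiv p) \<zeta> * poly ?r (inverse \<zeta>) - poly p \<zeta> * poly (pderiv ?r) (inverse \<zeta>) * inverse \<zeta> ^ 2) * w \<zeta>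
      + poly p \<zeta> * poly ?r (inverse \<zeta>) * deriv w \<zeta> = \<i> * (A1 \<zeta> - A2 \<zeta> - A3 \<zeta>)"
    if "\<zeta> \<in> path_image ucirc" for \<zeta>
  proof -
    have "\<zeta> \<in> sphere 0 1"
      using that by simp
    then have "cnj \<zeta> = inverse \<zeta>" and "\<zeta> \<noteq> 0" "w \<zeta> \<noteq> 0"
      using cnj_unit_sphere w_nz circ_S by auto
    then have h1: "poly ?r (inverse \<zeta>) = inverse \<zeta> * cnj (poly q \<zeta>)"
      and h2: "poly (pderiv ?r) (inverse \<zeta>) = cnj (poly (pderiv Q) \<zeta>)"
      and h3: "cnj (poly (pCons 0 (pderiv Q)) \<zeta>) = inverse \<zeta> * cnj (poly (pderiv Q) \<zeta>)"
      and h4: "deriv w \<zeta> = - vp w \<zeta> * w \<zeta>"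
      by (simp_all add: Q_def vp_def pderiv_map_poly_cnj flip: poly_cnj)
    show ?thesis
      unfolding A1_def A2_def A3_def h1 h2 h3 h4 using \<open>\<zeta> \<noteq> 0\<close>
      by (simp add: field_simps power2_eq_square)
  qed
  have "0 = contour_integral ucirc (\<lambda>\<zeta>. (poly (pderiv p) \<zeta> * poly ?r (inverse \<zeta>)
      - poly p \<zeta> * poly (pderiv ?r) (inverse \<zeta>) * inverse \<zeta> ^ 2) * w \<zeta>
      + poly p \<zeta> * poly ?r (inverse \<zeta>) * deriv w \<zeta>)"
    by (rule contour_integral_exact_ucirc[symmetric])
  also have "\<dots> = contour_integral ucirc (\<lambda>\<zeta>. \<i> * (A1 \<zeta> - A2 \<zeta> - A3 \<zeta>))"
    by (rule contour_integral_eq) (rule pointwise)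
  also have "\<dots> = \<i> * (contour_integral ucirc A1 - contour_integral ucirc A2 - contour_integral ucirc A3)"
    using A by (simp add: contour_integral_lmul contour_integral_diff contour_integrable_diff)
  finally have "contour_integral ucirc A1 = contour_integral ucirc A2 + contour_integral ucirc A3"
    by (simp add: diff_eq_eq ac_simps)
  then show ?thesis
    unfolding A1_def A2_def A3_def ip_def ip_vp_def Q_def .
qed

lemma poly_pderiv_phi:
  assumes "n \<ge> 1"
  shows "poly (pderiv (phi n)) x =
    (\<Sum>k<n. poly (phi k) x * ip_vp (phi n) (phi k)) + of_nat n * kc (n - 1) / kc n * poly (phi (n - 1)) x"
proof -
  have "degree (pderiv (phi n)) \<le> n - 1"
    by (simp add: degree_pderiv)
  then have "poly (pderiv (phi n)) x = poly (\<Sum>k\<le>n - 1. smult (ip (pderiv (phi n)) (phi k)) (phi k)) x"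
    using phi_expansion by metis
  also have "{..n - 1} = {..<n}"
    using assms by auto
  also have "poly (\<Sum>k<n. smult (ip (pderiv (phi n)) (phi k)) (phi k)) x =
      (\<Sum>k<n. ip (pderiv (phi n)) (phi k) * poly (phi k) x)"
    by (simp add: poly_sum)
  also have "\<dots> = (\<Sum>k<n. poly (phi k) x * ip_vp (phi n) (phi k)
      + (if k = n - 1 then of_nat n * kc (n - 1) / kc n * poly (phi (n - 1)) x else 0))"
    by (intro sum.cong) (auto simp: ip_pderiv_left ip_phi_pCons_pderiv algebra_simps)
  finally show ?thesis
    using assms by (simp add: sum.distrib)
qed

lemma sum_phi_ip_vp:
  assumes "x \<in> S"
  shows "(\<Sum>k<n. poly (phi k) x * ip_vp (phi n) (phi k)) = \<i> * contour_integral ucirc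
     (\<lambda>\<zeta>. dquot (vp w) x \<zeta> * (poly (phi n) \<zeta> * (poly (phi n) x * cnj (poly (phi n) \<zeta>)
        - poly (pstar (phi n)) x * cnj (poly (pstar (phi n)) \<zeta>)) * w \<zeta>))"
    (is "_ = \<i> * contour_integral ucirc (\<lambda>\<zeta>. dquot (vp w) x \<zeta> * ?h \<zeta>)")
proof -
  define F G where "F k \<zeta> = vp w \<zeta> * poly (phi n) \<zeta> * cnj (poly (phi k) \<zeta>) * w \<zeta> / (\<i> * \<zeta>)"
    and "G k \<zeta> = poly (phi n) \<zeta> * cnj (poly (phi k) \<zeta>) * w \<zeta> / (\<i> * \<zeta>)" for k \<zeta>
  define P where "P \<zeta> = (\<Sum>k<n. poly (phi k) x * cnj (poly (phi k) \<zeta>))" for \<zeta>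
  \<comment> \<open>Subtracting v'(x) \<langle>\<phi>_n, \<phi>_k\<rangle> = 0 produces the factor v'(\<zeta>) - v'(x), i.e. the kernel times
      \<zeta> - x, which the Christoffel-Darboux formula absorbs into the sum P.\<close>
  have FG: "F k contour_integrable_on ucirc" "G k contour_integrable_on ucirc" for k
    unfolding F_def G_def by (rule ip_vp_integrable ip_integrable)+
  have "(\<Sum>k<n. poly (phi k) x * ip_vp (phi n) (phi k)) =
      (\<Sum>k<n. poly (phi k) x * (ip_vp (phi n) (phi k) - vp w x * ip (phi n) (phi k)))"
    by (simp add: ip_phi_phi)
  also have "\<dots> = contour_integral ucirc (\<lambda>\<zeta>. \<Sum>k<n. poly (phi k) x * (F k \<zeta> - vp w x * G k \<zeta>))"
    unfolding ip_vp_def ip_def F_def[symmetric] G_def[symmetric]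
    using FG by (subst contour_integral_sum)
      (auto simp: contour_integral_lmul contour_integral_diff contour_integrable_lmul contour_integrable_diff)
  also have "\<dots> = contour_integral ucirc
      (\<lambda>\<zeta>. (vp w \<zeta> - vp w x) * poly (phi n) \<zeta> * P \<zeta> * w \<zeta> / (\<i> * \<zeta>))"
    unfolding P_def F_def G_def
    by (intro arg_cong[where f = "contour_integral ucirc"] ext)
      (simp add: sum_distrib_left sum_distrib_right sum_divide_distrib sum_subtractf
        diff_divide_distrib algebra_simps)
  also have "\<dots> = contour_integral ucirc (\<lambda>\<zeta>. \<i> * (dquot (vp w) x \<zeta> * ?h \<zeta>))"
  proof (rule contour_integral_eq)
    fix \<zeta> assume "\<zeta> \<in> path_image ucirc"
    then have "cnj \<zeta> = inverse \<zeta>" "\<zeta> \<noteq> 0"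
      using cnj_unit_sphere by auto
    then have "(\<zeta> - x) / \<zeta> = 1 - x * cnj \<zeta>"
      by (simp add: field_simps)
    then have CD: "(\<zeta> - x) / \<zeta> * P \<zeta> =
        poly (pstar (phi n)) x * cnj (poly (pstar (phi n)) \<zeta>) - poly (phi n) x * cnj (poly (phi n) \<zeta>)"
      using christoffel_darboux[of x \<zeta> n] by (simp add: P_def)
    have "(vp w \<zeta> - vp w x) * poly (phi n) \<zeta> * P \<zeta> * w \<zeta> / (\<i> * \<zeta>) =
        dquot (vp w) x \<zeta> * poly (phi n) \<zeta> * w \<zeta> * ((\<zeta> - x) / \<zeta> * P \<zeta>) / \<i>"
      using \<open>\<zeta> \<noteq> 0\<close> by (simp only: dquot_mult_diff) (simp add: field_simps)
    also have "\<dots> = \<i> * (dquot (vp w) x \<zeta> * ?h \<zeta>)"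
      unfolding CD by (simp add: algebra_simps)
    finally show "(vp w \<zeta> - vp w x) * poly (phi n) \<zeta> * P \<zeta> * w \<zeta> / (\<i> * \<zeta>) =
        \<i> * (dquot (vp w) x \<zeta> * ?h \<zeta>)" .
  qed
  also have "\<dots> = \<i> * contour_integral ucirc (\<lambda>\<zeta>. dquot (vp w) x \<zeta> * ?h \<zeta>)"
    using continuous_on_dquot_vp[OF assms]
    by (intro contour_integral_lmul contour_integrable_ucirc continuous_intros w_cont) auto
  finally show ?thesis .
qed

lemma Acoef_dquot:
  "Acoef w phi n x = of_nat n * kc (n - 1) / kc n + \<i> * kc (n - 1) / poly (phi n) 0 * x *
     contour_integral ucirc (\<lambda>\<zeta>. dquot (vp w) x \<zeta> *
       (poly (phi n) \<zeta> * cnj (poly (pstar (phi n)) \<zeta>) * w \<zeta>))"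
  unfolding Acoef_def
  using contour_integral_dquot[OF simple_path_circlepath[THEN iffD2], of 1 0 "vp w" x
      "\<lambda>\<zeta>. poly (phi n) \<zeta> * cnj (poly (pstar (phi n)) \<zeta>) * w \<zeta>"]
  by (simp add: mult.assoc)

lemma Bcoef_dquot:
  "Bcoef w phi n x = - \<i> * contour_integral ucirc (\<lambda>\<zeta>. dquot (vp w) x \<zeta> *
     (poly (phi n) \<zeta> * (cnj (poly (phi n) \<zeta>) - kc n / poly (phi n) 0 * cnj (poly (pstar (phi n)) \<zeta>))
       * w \<zeta>))"
  unfolding Bcoef_def
  using contour_integral_dquot[OF simple_path_circlepath[THEN iffD2], of 1 0 "vp w" x
      "\<lambda>\<zeta>. poly (phi n) \<zeta> * (cnj (poly (phi n) \<zeta>) - kc n / poly (phi n) 0 * cnj (poly (pstar (phi n)) \<zeta>)) * w \<zeta>"]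
  by (simp add: mult.assoc)

lemma pderiv_phi_eq:
  assumes "x \<in> S" and "n \<ge> 1" and "poly (phi n) 0 \<noteq> 0"
  shows "poly (pderiv (phi n)) x = Acoef w phi n x * poly (phi (n - 1)) x - Bcoef w phi n x * poly (phi n) x"
proof -
  define a where "a = poly (phi n) 0"
  have "a \<noteq> 0"
    using assms by (simp add: a_def)
  define D where "D = dquot (vp w) x"
  define h1 h2 where "h1 \<zeta> = poly (phi n) \<zeta> * cnj (poly (pstar (phi n)) \<zeta>) * w \<zeta>"
    and "h2 \<zeta> = poly (phi n) \<zeta> * (cnj (poly (phi n) \<zeta>) - kc n / a * cnj (poly (pstar (phi n)) \<zeta>)) * w \<zeta>"
    for \<zeta>
  have integrable: "(\<lambda>\<zeta>. D \<zeta> * h1 \<zeta>) contour_integrable_on ucirc" "(\<lambda>\<zeta>. D \<zeta> * h2 \<zeta>) contour_integrable_on ucirc"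
    unfolding D_def h1_def h2_def using continuous_on_dquot_vp[OF \<open>x \<in> S\<close>] \<open>a \<noteq> 0\<close>
    by (auto intro!: contour_integrable_ucirc continuous_intros w_cont)
  have pstar_x: "poly (pstar (phi n)) x = (kc n * poly (phi n) x - kc (n - 1) * x * poly (phi (n - 1)) x) / a"
    using poly_szego_recursion[OF \<open>n \<ge> 1\<close>, of x] \<open>a \<noteq> 0\<close> by (simp add: a_def field_simps)
  define c where "c = kc (n - 1) * x * poly (phi (n - 1)) x / a"
  have "(\<Sum>k<n. poly (phi k) x * ip_vp (phi n) (phi k)) = \<i> * contour_integral ucirc
      (\<lambda>\<zeta>. poly (phi n) x * (D \<zeta> * h2 \<zeta>) + c * (D \<zeta> * h1 \<zeta>))"
    unfolding sum_phi_ip_vp[OF \<open>x \<in> S\<close>] pstar_x D_def[symmetric] h1_def h2_def c_def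
    using \<open>a \<noteq> 0\<close> by (simp add: field_simps)
  also have "\<dots> = \<i> * (poly (phi n) x * contour_integral ucirc (\<lambda>\<zeta>. D \<zeta> * h2 \<zeta>)
      + c * contour_integral ucirc (\<lambda>\<zeta>. D \<zeta> * h1 \<zeta>))"
    using integrable by (simp add: contour_integral_add contour_integral_lmul contour_integrable_lmul)
  finally show ?thesis
    using poly_pderiv_phi[OF \<open>n \<ge> 1\<close>, of x]
    unfolding Acoef_dquot Bcoef_dquot a_def[symmetric] D_def[symmetric] h1_def[symmetric] h2_def[symmetric]
    by (simp add: c_def algebra_simps)
qed

lemma Lop1_phi:
  assumes "x \<in> S" and "n \<ge> 1" and "poly (phi n) 0 \<noteq> 0"
  shows "Lop1 w phi n (poly (phi n)) x = Acoef w phi n x * poly (phi (n - 1)) x"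
  using pderiv_phi_eq[OF assms] by (simp add: Lop1_def deriv_poly)

lemma Lop2_phi:
  assumes "x \<in> S" and "x \<noteq> 0" and "n \<ge> 2"
    and a: "poly (phi n) 0 \<noteq> 0" and b: "poly (phi (n - 1)) 0 \<noteq> 0"
  shows "Lop2 w phi n (poly (phi (n - 1))) x =
    Acoef w phi (n - 1) x / x * (poly (phi (n - 1)) 0 * kc (n - 1))
      / (poly (phi n) 0 * kc (n - 2)) * poly (phi n) x"
proof -
  have "n - 1 \<ge> 1" and nn: "n - 1 - 1 = n - 2"
    using \<open>n \<ge> 2\<close> by auto
  have pderiv: "poly (pderiv (phi (n - 1))) x =
      Acoef w phi (n - 1) x * poly (phi (n - 2)) x - Bcoef w phi (n - 1) x * poly (phi (n - 1)) x"
    using pderiv_phi_eq[OF \<open>x \<in> S\<close> \<open>n - 1 \<ge> 1\<close> b] unfolding nn .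
  have "Lop2 w phi n (poly (phi (n - 1))) x = Acoef w phi (n - 1) x *
      ((kc (n - 1) * poly (phi n) 0 * poly (phi (n - 1)) x + kc n * poly (phi (n - 1)) 0 * x * poly (phi (n - 1)) x
        - kc (n - 2) * poly (phi n) 0 * x * poly (phi (n - 2)) x) / (x * poly (phi n) 0 * kc (n - 2)))"
    unfolding Lop2_def deriv_poly pderiv using \<open>x \<noteq> 0\<close> a by (simp add: field_simps)
  also have "kc (n - 1) * poly (phi n) 0 * poly (phi (n - 1)) x + kc n * poly (phi (n - 1)) 0 * x * poly (phi (n - 1)) x
        - kc (n - 2) * poly (phi n) 0 * x * poly (phi (n - 2)) x = poly (phi (n - 1)) 0 * kc (n - 1) * poly (phi n) x"
    using three_term_recurrence[OF \<open>n \<ge> 2\<close>, of x] by (simp add: algebra_simps)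
  finally show ?thesis
    by (simp add: ac_simps)
qed

lemma continuous_on_Acoef: "continuous_on S (Acoef w phi n)"
proof -
  define h where "h \<zeta> = poly (phi n) \<zeta> * cnj (poly (pstar (phi n)) \<zeta>) * w \<zeta>" for \<zeta>
  have "continuous_on (S \<times> sphere 0 1) (\<lambda>(x, \<zeta>). dquot (vp w) x \<zeta>)"
    by (rule continuous_on_subset[OF continuous_on_dquot[OF S_open vp_holomorphic]]) (use circ_S in auto)
  moreover have "continuous_on (S \<times> sphere 0 1) (\<lambda>(x, \<zeta>). h \<zeta>)"
    unfolding h_def split_def
    by (intro continuous_intros continuous_on_compose2[OF w_cont]) auto
  ultimately have "continuous_on S (\<lambda>x. contour_integral ucirc (\<lambda>\<zeta>. dquot (vp w) x \<zeta> * h \<zeta>))"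
    by (intro continuous_on_contour_integral_circlepath) (auto simp: split_def intro: continuous_on_mult)
  then show ?thesis
    unfolding Acoef_dquot[abs_def] h_def by (intro continuous_intros)
qed

lemma Lop2_Lop1_div_Acoef:
  assumes "z \<in> S" and "z \<noteq> 0" and "n \<ge> 2"
    and "poly (phi n) 0 \<noteq> 0" and "poly (phi (n - 1)) 0 \<noteq> 0" and "Acoef w phi n z \<noteq> 0"
  shows "Lop2 w phi n (\<lambda>x. Lop1 w phi n (poly (phi n)) x / Acoef w phi n x) z =
    Acoef w phi (n - 1) z / z * (poly (phi (n - 1)) 0 * kc (n - 1))
      / (poly (phi n) 0 * kc (n - 2)) * poly (phi n) z"
proof -
  define f where "f = (\<lambda>x. Lop1 w phi n (poly (phi n)) x / Acoef w phi n x)"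
  define T where "T = S \<inter> Acoef w phi n -` (- {0})"
  have "open T"
    unfolding T_def by (rule continuous_open_preimage[OF continuous_on_Acoef S_open]) auto
  moreover have "z \<in> T"
    using assms by (simp add: T_def)
  moreover have "f x = poly (phi (n - 1)) x" if "x \<in> T" for x
    using that Lop1_phi[of x n] assms by (simp add: T_def f_def)
  ultimately have "\<forall>\<^sub>F x in nhds z. f x = poly (phi (n - 1)) x"
    using eventually_nhds_in_open[of T z] by (auto elim!: eventually_mono)
  then have "deriv f z = deriv (poly (phi (n - 1))) z" and "f z = poly (phi (n - 1)) z"
    by (auto intro: deriv_cong_ev eventually_nhds_x_imp_x)
  then have "Lop2 w phi n f z = Lop2 w phi n (poly (phi (n - 1))) z"
    by (simp add: Lop2_def)
  then show ?thesis
    using Lop2_phi[OF assms(1-5)] unfolding f_def by simp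
qed

end

theorem mainTheorem2:
  fixes w :: "complex \<Rightarrow> complex" and S :: "complex set"
    and phi :: "nat \<Rightarrow> complex poly" and n :: nat and z :: complex
  assumes S_open: "open S" and circ_S: "sphere 0 1 \<subseteq> S"
    and w_holo: "w holomorphic_on S" and w_nz: "\<forall>x\<in>S. w x \<noteq> 0"
    and w_pos: "\<forall>\<zeta>\<in>sphere 0 1. Im (w \<zeta>) = 0 \<and> Re (w \<zeta>) > 0"
    and w_norm: "contour_integral ucirc (\<lambda>\<zeta>. w \<zeta> / (\<i> * \<zeta>)) = 1"
    and moments: "\<forall>m::int. (\<lambda>\<zeta>. \<zeta> powi m * w \<zeta> / (\<i> * \<zeta>)) contour_integrable_on ucirc"
    and kernel_int: "\<forall>x\<in>S. \<forall>m::int.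
        (\<lambda>\<zeta>. (vp w x - vp w \<zeta>) / (x - \<zeta>) * \<zeta> powi m * w \<zeta> / (\<i> * \<zeta>)) contour_integrable_on ucirc"
    and phi_deg: "\<forall>k. degree (phi k) = k"
    and phi_lead: "\<forall>k. Im (lead_coeff (phi k)) = 0 \<and> Re (lead_coeff (phi k)) > 0"
    and phi_orth: "\<forall>j k. contour_integral ucirc
        (\<lambda>\<zeta>. poly (phi j) \<zeta> * cnj (poly (phi k) \<zeta>) * w \<zeta> / (\<i> * \<zeta>)) = (if j = k then 1 else 0)"
    and n2: "n \<ge> 2"
    and phin0: "poly (phi n) 0 \<noteq> 0" and phin10: "poly (phi (n - 1)) 0 \<noteq> 0"
    and zS: "z \<in> S" and z0: "z \<noteq> 0"
  shows "poly (pderiv (phi n)) z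
           = Acoef w phi n z * poly (phi (n - 1)) z - Bcoef w phi n z * poly (phi n) z
       \<and> Lop1 w phi n (poly (phi n)) z = Acoef w phi n z * poly (phi (n - 1)) z
       \<and> Lop2 w phi n (poly (phi (n - 1))) z
           = Acoef w phi (n - 1) z / z * (poly (phi (n - 1)) 0 * of_real (kap phi (n - 1)))
               / (poly (phi n) 0 * of_real (kap phi (n - 2))) * poly (phi n) z
       \<and> (Acoef w phi n z \<noteq> 0 \<longrightarrow>
           Lop2 w phi n (\<lambda>x. Lop1 w phi n (poly (phi n)) x / Acoef w phi n x) z
           = Acoef w phi (n - 1) z / z * (poly (phi (n - 1)) 0 * of_real (kap phi (n - 1)))
               / (poly (phi n) 0 * of_real (kap phi (n - 2))) * poly (phi n) z)"
proof -
  interpret opuc_holomorphic w phi S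
    using S_open circ_S w_holo w_nz phi_deg phi_lead phi_orth
      holomorphic_on_imp_continuous_on[OF w_holo] continuous_on_subset
    by unfold_locales blast+
  have "n \<ge> 1"
    using n2 by simp
  show ?thesis
    using pderiv_phi_eq[OF zS \<open>n \<ge> 1\<close> phin0] Lop1_phi[OF zS \<open>n \<ge> 1\<close> phin0]
      Lop2_phi[OF zS z0 n2 phin0 phin10] Lop2_Lop1_div_Acoef[OF zS z0 n2 phin0 phin10]
    by blast
qed

end
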